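(* If the speeds satisfy $\liminf_{n\to\infty}\left(\prod_{i=2}^n s_i\right)^{1/n}=1$, then $\mathcal{S}$-DC is not competitive for the infinite server problem on the half-line $[0,\infty)$ with source $0$.
   Context: Infinite server problem on the half-line $[0,\infty)$ with source $0$: an unbounded number of servers initially reside at $0$; requests are revealed one by one and must be served immediately, without knowledge of future requests, by moving a server to the request; the cost is the total distance traveled. Let $\mathcal{S}=\{s_i\ge1 : i\ge2\}$ be given by a monotonic (non-decreasing or non-increasing) sequence of speeds $s_i\ge1$. Denote by $x_i$ the $i$-th server from the right. Algorithm $\mathcal{S}$-DC: if a request lies between servers $x_{i+1}$ (to its left) and $x_i$ (to its right), move them towards it with speeds $s_{i+1}$ and $1$ respectively until one of them reaches it; if no server is to the right of the request, move the rightmost server to the request. An online algorithm is competitive if there are $\rho,c$ with $ALG(\sigma)\le\rho\,OPT(\sigma)+c$ for all request sequences $\sigma$. *)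

theory Defs
  imports "HOL-Analysis.Analysis"
begin

text \<open>Configurations of the infinite server problem on the half-line [0,oo) with source 0.
  A configuration is given by x :: nat => real, where x i (for i >= 1) is the position of the
  i-th server from the right; x is non-increasing on i >= 1 and x i = 0 for all but finitely
  many i (the unboundedly many servers still at the source 0). The value x 0 is unused.\<close>

text \<open>Speeds s i are used for i >= 2. Let i be least with x (i+1) < r.
  If i = 0 (no server at or to the right of r) the rightmost server moves to r.
  Otherwise x (i+1) < r <= x i; the two servers move towards r with speeds s (i+1) and 1
  until one of them reaches r (time t). If no such i exists (r = 0) a server is already at r.\<close>
definition dc_step :: "(nat \<Rightarrow> real) \<Rightarrow> (nat \<Rightarrow> real) \<Rightarrow> real \<Rightarrow> (nat \<Rightarrow> real) \<times> real" where
  "dc_step s x r =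
    (if \<not> (\<exists>i. x (Suc i) < r) then (x, 0)
     else (let i = (LEAST i. x (Suc i) < r) in
       if i = 0 then (x(1 := r), r - x 1)
       else (let t = min (x i - r) ((r - x (Suc i)) / s (Suc i)) in
         (x(i := x i - t, Suc i := x (Suc i) + s (Suc i) * t), (1 + s (Suc i)) * t))))"

fun dc_cost_from :: "(nat \<Rightarrow> real) \<Rightarrow> (nat \<Rightarrow> real) \<Rightarrow> real list \<Rightarrow> real" where
  "dc_cost_from s x [] = 0"
| "dc_cost_from s x (r # rs) = (case dc_step s x r of (x', c) \<Rightarrow> c + dc_cost_from s x' rs)"

definition DC_cost :: "(nat \<Rightarrow> real) \<Rightarrow> real list \<Rightarrow> real" where
  "DC_cost s \<sigma> = dc_cost_from s (\<lambda>_. 0) \<sigma>"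

text \<open>Offline solutions: servers labelled by naturals, p t k = position of server k after
  serving the first t requests; only servers k < N ever leave the source; all positions lie
  in the half-line; after step t+1 some server is at request t.\<close>
definition feasible_schedule :: "real list \<Rightarrow> nat \<Rightarrow> (nat \<Rightarrow> nat \<Rightarrow> real) \<Rightarrow> bool" where
  "feasible_schedule \<sigma> N p \<longleftrightarrow>
     (\<forall>k. p 0 k = 0) \<and> (\<forall>t k. 0 \<le> p t k) \<and> (\<forall>t k. N \<le> k \<longrightarrow> p t k = 0) \<and>
     (\<forall>t < length \<sigma>. \<exists>k. p (Suc t) k = \<sigma> ! t)"

definition schedule_cost :: "real list \<Rightarrow> nat \<Rightarrow> (nat \<Rightarrow> nat \<Rightarrow> real) \<Rightarrow> real" where
  "schedule_cost \<sigma> N p = (\<Sum>t<length \<sigma>. \<Sum>k<N. \<bar>p (Suc t) k - p t k\<bar>)"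

definition OPT :: "real list \<Rightarrow> real" where
  "OPT \<sigma> = Inf {schedule_cost \<sigma> N p | N p. feasible_schedule \<sigma> N p}"

definition competitive :: "(real list \<Rightarrow> real) \<Rightarrow> bool" where
  "competitive ALG \<longleftrightarrow>
     (\<exists>\<rho> c. \<forall>\<sigma>. (\<forall>r\<in>set \<sigma>. 0 \<le> r) \<longrightarrow> ALG \<sigma> \<le> \<rho> * OPT \<sigma> + c)"

end

theory Submission
  imports Defs
begin

text \<open>With weights w 1 = 0 and w (i+1) s (i+1) = w i + 1, the potential \<Sum> w i x i of a
  configuration (x i the position of the i-th server from the right) grows by at most half the
  cost of each S-DC step. The liminf condition together with monotonicity forces s i \<rightarrow> 1, hence
  w i \<rightarrow> \<infinity>. The adversary repeats the n points 1, 1 + 1/n, ..., 2 - 1/n, which OPT serves at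
  cost at most 2n. If S-DC were competitive, its cost on these sequences would be bounded by
  \<rho> 2n + c, so some round would be nearly free; after it n distinct servers sit near the points,
  and all but the first m of them carry weight at least B. The potential is then at least
  (n - m) B / 2, which exceeds half the cost bound once B is large compared to \<rho> and c.\<close>

section \<open>Configurations and the potential\<close>

definition server_config :: "nat \<Rightarrow> (nat \<Rightarrow> real) \<Rightarrow> bool" where
  "server_config K x \<longleftrightarrow> (\<forall>j. 0 \<le> x j) \<and> (\<forall>j>K. x j = 0)"

text \<open>The weights are chosen so that one move of S-DC between servers i and i+1, which costs
  (1 + s (i+1)) t, raises the potential by exactly t.\<close>

fun dc_weight :: "(nat \<Rightarrow> real) \<Rightarrow> nat \<Rightarrow> real" where
  "dc_weight s 0 = 0"
| "dc_weight s (Suc 0) = 0"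
| "dc_weight s (Suc (Suc j)) = (dc_weight s (Suc j) + 1) / s (Suc (Suc j))"

definition potential :: "nat \<Rightarrow> (nat \<Rightarrow> real) \<Rightarrow> (nat \<Rightarrow> real) \<Rightarrow> real" where
  "potential N w x = (\<Sum>j<N. w j * x j)"

fun dc_run :: "(nat \<Rightarrow> real) \<Rightarrow> (nat \<Rightarrow> real) \<Rightarrow> real list \<Rightarrow> nat \<Rightarrow> real" where
  "dc_run s x [] = x"
| "dc_run s x (r # rs) = dc_run s (fst (dc_step s x r)) rs"

lemma dc_weight_nonneg:
  assumes "\<forall>i\<ge>2. 1 \<le> s i"
  shows "0 \<le> dc_weight s j"
  using assms
proof (induction s j rule: dc_weight.induct)
  case (3 s j)
  then have "1 \<le> s (Suc (Suc j))" "0 \<le> dc_weight s (Suc j)" by simp_all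
  then show ?case by simp
qed simp_all

lemma dc_weight_Suc:
  assumes "s (Suc i) \<noteq> 0" and "1 \<le> i"
  shows "dc_weight s (Suc i) * s (Suc i) = dc_weight s i + 1"
  using assms by (cases i) auto

lemma potential_upd:
  assumes "a < N"
  shows "potential N w (x(a := y)) = potential N w x + w a * (y - x a)"
proof -
  have "potential N w (x(a := y)) = (\<Sum>j<N. w j * x j + (if j = a then w a * (y - x a) else 0))"
    unfolding potential_def by (rule sum.cong) (auto simp: algebra_simps)
  also have "\<dots> = potential N w x + w a * (y - x a)"
    using assms by (simp add: sum.distrib potential_def)
  finally show ?thesis .
qed

lemma dc_cost_from_Cons:
  "dc_cost_from s x (r # rs) = snd (dc_step s x r) + dc_cost_from s (fst (dc_step s x r)) rs"
  by (cases "dc_step s x r") simp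

lemma dc_run_append: "dc_run s x (rs @ qs) = dc_run s (dc_run s x rs) qs"
  by (induction rs arbitrary: x) simp_all

lemma dc_cost_from_append:
  "dc_cost_from s x (rs @ qs) = dc_cost_from s x rs + dc_cost_from s (dc_run s x rs) qs"
  by (induction rs arbitrary: x) (simp_all add: dc_cost_from_Cons del: dc_cost_from.simps(2))

section \<open>Steps and runs of S-DC\<close>

context
  fixes s :: "nat \<Rightarrow> real"
  assumes speeds: "\<forall>i\<ge>2. 1 \<le> s i"
begin

lemma dc_step_cases:
  assumes r: "0 < r" and x: "server_config K x"
  obtains (rightmost) "x 1 < r" "dc_step s x r = (x(1 := r), r - x 1)"
  | (between) i t where "1 \<le> i" "i \<le> K" "1 \<le> s (Suc i)" "0 \<le> t" "t \<le> x i - r"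
      "t = x i - r \<or> s (Suc i) * t = r - x (Suc i)"
      "dc_step s x r = (x(i := x i - t, Suc i := x (Suc i) + s (Suc i) * t), (1 + s (Suc i)) * t)"
proof -
  have x0: "x (Suc K) = 0" using x unfolding server_config_def by simp
  then have ex: "\<exists>i. x (Suc i) < r" using r by (intro exI[of _ K]) simp
  define i where "i = (LEAST i. x (Suc i) < r)"
  have xi1: "x (Suc i) < r" unfolding i_def using ex by (rule LeastI_ex)
  have iK: "i \<le> K" unfolding i_def using x0 r by (intro Least_le) simp
  show thesis
  proof (cases "i = 0")
    case True
    then show thesis
      using rightmost xi1 ex unfolding dc_step_def i_def by (simp add: Let_def)
  next
    case False
    have "\<not> x (Suc (i - 1)) < r" unfolding i_def by (rule not_less_Least) (use False i_def in simp)
    then have xi: "r \<le> x i" using False by simp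
    define t where "t = min (x i - r) ((r - x (Suc i)) / s (Suc i))"
    have s1: "1 \<le> s (Suc i)" using speeds False by simp
    have "t = x i - r \<or> s (Suc i) * t = r - x (Suc i)"
      using s1 unfolding t_def min_def by auto
    moreover have "0 \<le> t" "t \<le> x i - r" unfolding t_def using xi xi1 s1 by auto
    moreover have "dc_step s x r
        = (x(i := x i - t, Suc i := x (Suc i) + s (Suc i) * t), (1 + s (Suc i)) * t)"
      unfolding dc_step_def using ex False by (simp add: Let_def t_def i_def)
    ultimately show thesis using between[of i t] False iK s1 by simp
  qed
qed

lemma dc_step_config:
  assumes "0 < r" "server_config K x"
  shows "server_config (Suc K) (fst (dc_step s x r))"
  using assms
  by (cases rule: dc_step_cases[OF assms]) (auto simp: server_config_def)

lemma dc_step_cost_nonneg: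
  assumes "0 < r" "server_config K x"
  shows "0 \<le> snd (dc_step s x r)"
  by (cases rule: dc_step_cases[OF assms]) auto

lemma dc_step_serves:
  assumes "0 < r" "server_config K x"
  shows "\<exists>j. fst (dc_step s x r) j = r"
proof (cases rule: dc_step_cases[OF assms, case_names rightmost between])
  case rightmost
  then show ?thesis by auto
next
  case (between i t)
  then show ?thesis by (auto intro: exI[of _ i] exI[of _ "Suc i"])
qed

lemma dc_step_moves:
  assumes "0 < r" "server_config K x"
  shows "\<bar>fst (dc_step s x r) j - x j\<bar> \<le> snd (dc_step s x r)"
  by (cases rule: dc_step_cases[OF assms]) (auto simp: algebra_simps)

lemma dc_step_potential:
  assumes "0 < r" "server_config K x" and N: "Suc K < N"
  shows "potential N (dc_weight s) (fst (dc_step s x r))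
      \<le> potential N (dc_weight s) x + snd (dc_step s x r) / 2"
proof (cases rule: dc_step_cases[OF assms(1,2), case_names rightmost between])
  case rightmost
  then show ?thesis using N by (simp add: potential_upd)
next
  case (between i t)
  let ?w = "dc_weight s"
  have "potential N ?w (fst (dc_step s x r))
      = potential N ?w x - ?w i * t + ?w (Suc i) * s (Suc i) * t"
    using between N by (simp add: potential_upd algebra_simps)
  also have "\<dots> = potential N ?w x + t"
    using between dc_weight_Suc[of s i] by (simp add: algebra_simps)
  also have "\<dots> \<le> potential N ?w x + (1 + s (Suc i)) * t / 2"
    using mult_right_mono[of 1 "s (Suc i)" t] between by (simp add: field_simps)
  finally show ?thesis using between by simp
qed

lemma dc_run_config:
  "server_config K x \<Longrightarrow> \<forall>r\<in>set rs. 0 < r \<Longrightarrow> server_config (K + length rs) (dc_run s x rs)"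
proof (induction rs arbitrary: x K)
  case (Cons r rs)
  then have "server_config (Suc K) (fst (dc_step s x r))" using dc_step_config by simp
  then show ?case using Cons by fastforce
qed simp

lemma dc_run_moves:
  "server_config K x \<Longrightarrow> \<forall>r\<in>set rs. 0 < r \<Longrightarrow> \<bar>dc_run s x rs j - x j\<bar> \<le> dc_cost_from s x rs"
proof (induction rs arbitrary: x K)
  case (Cons r rs)
  let ?x' = "fst (dc_step s x r)"
  have "server_config (Suc K) ?x'" using Cons.prems dc_step_config by simp
  then have "\<bar>dc_run s ?x' rs j - ?x' j\<bar> \<le> dc_cost_from s ?x' rs"
    using Cons by simp
  moreover have "\<bar>?x' j - x j\<bar> \<le> snd (dc_step s x r)"
    using Cons.prems dc_step_moves by simp
  ultimately show ?case by (simp add: dc_cost_from_Cons del: dc_cost_from.simps(2))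
qed simp

lemma dc_run_serves:
  "server_config K x \<Longrightarrow> \<forall>r\<in>set rs. 0 < r \<Longrightarrow> q \<in> set rs
    \<Longrightarrow> \<exists>j. \<bar>dc_run s x rs j - q\<bar> \<le> dc_cost_from s x rs"
proof (induction rs arbitrary: x K)
  case (Cons r rs)
  let ?x' = "fst (dc_step s x r)"
  have x': "server_config (Suc K) ?x'" using Cons.prems dc_step_config by simp
  have c: "0 \<le> snd (dc_step s x r)" using Cons.prems dc_step_cost_nonneg by simp
  have "\<exists>j. \<bar>dc_run s ?x' rs j - q\<bar> \<le> dc_cost_from s ?x' rs"
  proof (cases "q \<in> set rs")
    case True
    then show ?thesis using Cons x' by simp
  next
    case False
    then have "q = r" using Cons.prems by simp
    then obtain j where "?x' j = q" using Cons.prems dc_step_serves by force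
    then show ?thesis using dc_run_moves[OF x', of rs j] Cons.prems by auto
  qed
  then obtain j where "\<bar>dc_run s ?x' rs j - q\<bar> \<le> dc_cost_from s ?x' rs" ..
  then show ?case using c
    by (intro exI[of _ j]) (simp add: dc_cost_from_Cons del: dc_cost_from.simps(2))
qed simp

lemma dc_run_potential:
  "server_config K x \<Longrightarrow> \<forall>r\<in>set rs. 0 < r \<Longrightarrow> K + length rs < N
    \<Longrightarrow> potential N (dc_weight s) (dc_run s x rs)
        \<le> potential N (dc_weight s) x + dc_cost_from s x rs / 2"
proof (induction rs arbitrary: x K)
  case (Cons r rs)
  let ?x' = "fst (dc_step s x r)"
  have "server_config (Suc K) ?x'" using Cons.prems dc_step_config by simp
  then have "potential N (dc_weight s) (dc_run s ?x' rs)
      \<le> potential N (dc_weight s) ?x' + dc_cost_from s ?x' rs / 2"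
    using Cons by simp
  moreover have "potential N (dc_weight s) ?x'
      \<le> potential N (dc_weight s) x + snd (dc_step s x r) / 2"
    using Cons.prems dc_step_potential by simp
  ultimately show ?case by (simp add: dc_cost_from_Cons add_divide_distrib del: dc_cost_from.simps(2))
qed simp

end

section \<open>The offline optimum\<close>

text \<open>Serving any sequence of points of P offline: move one server to each point of P in the
  first step and never move again.\<close>

lemma OPT_bounds:
  assumes P: "\<forall>p\<in>set P. 0 \<le> p" and \<sigma>: "set \<sigma> \<subseteq> set P"
  shows "0 \<le> OPT \<sigma>" and "OPT \<sigma> \<le> sum_list P"
proof -
  define S where "S = {schedule_cost \<sigma> N p | N p. feasible_schedule \<sigma> N p}"
  define n where "n = length P"
  define p :: "nat \<Rightarrow> nat \<Rightarrow> real" where "p = (\<lambda>t k. if t = 0 \<or> n \<le> k then 0 else P ! k)"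
  have "feasible_schedule \<sigma> n p"
    unfolding feasible_schedule_def
  proof (intro conjI allI impI)
    fix t k show "0 \<le> p t k" unfolding p_def n_def using P by (auto simp: nth_mem)
  next
    fix t assume "t < length \<sigma>"
    then have "\<sigma> ! t \<in> set P" using \<sigma> nth_mem by blast
    then obtain k where "k < n" "P ! k = \<sigma> ! t" unfolding n_def by (auto simp: in_set_conv_nth)
    then show "\<exists>k. p (Suc t) k = \<sigma> ! t" unfolding p_def by (intro exI[of _ k]) auto
  qed (auto simp: p_def)
  then have mem: "schedule_cost \<sigma> n p \<in> S" unfolding S_def by blast
  have lower: "\<forall>y\<in>S. 0 \<le> y" unfolding S_def schedule_cost_def by (auto intro!: sum_nonneg)
  have P_sum: "(\<Sum>k<n. \<bar>p (Suc 0) k - p 0 k\<bar>) = sum_list P"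
  proof -
    have "(\<Sum>k<n. \<bar>p (Suc 0) k - p 0 k\<bar>) = (\<Sum>k<n. P ! k)"
      unfolding p_def using P by (intro sum.cong) (auto simp: n_def nth_mem)
    also have "\<dots> = sum_list P" by (simp add: sum_list_sum_nth n_def atLeast0LessThan)
    finally show ?thesis .
  qed
  have "schedule_cost \<sigma> n p \<le> sum_list P"
  proof (cases "length \<sigma>")
    case 0
    then show ?thesis unfolding schedule_cost_def using P by (simp add: sum_list_nonneg)
  next
    case (Suc L)
    have "schedule_cost \<sigma> n p = (\<Sum>k<n. \<bar>p (Suc 0) k - p 0 k\<bar>)
        + (\<Sum>t<L. \<Sum>k<n. \<bar>p (Suc (Suc t)) k - p (Suc t) k\<bar>)"
      unfolding schedule_cost_def Suc by (rule sum.lessThan_Suc_shift)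
    then show ?thesis using P_sum by (simp add: p_def)
  qed
  moreover have "OPT \<sigma> \<le> schedule_cost \<sigma> n p"
    unfolding OPT_def S_def[symmetric] using mem lower by (intro cInf_lower bdd_belowI) auto
  ultimately show "OPT \<sigma> \<le> sum_list P" by linarith
  show "0 \<le> OPT \<sigma>" unfolding OPT_def S_def[symmetric] using mem lower by (intro cInf_greatest) auto
qed

lemma competitive_obtains_sum_list_bound:
  assumes "competitive ALG"
  obtains \<rho> c where "0 \<le> \<rho>"
    and "\<And>P \<sigma>. \<forall>p\<in>set P. 0 \<le> p \<Longrightarrow> set \<sigma> \<subseteq> set P \<Longrightarrow> ALG \<sigma> \<le> \<rho> * sum_list P + c"
proof -
  obtain \<rho> c where H: "\<And>\<sigma>. \<forall>r\<in>set \<sigma>. 0 \<le> r \<Longrightarrow> ALG \<sigma> \<le> \<rho> * OPT \<sigma> + c"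
    using assms unfolding competitive_def by blast
  have "ALG \<sigma> \<le> \<bar>\<rho>\<bar> * sum_list P + c" if P: "\<forall>p\<in>set P. 0 \<le> p" and \<sigma>: "set \<sigma> \<subseteq> set P" for P \<sigma>
  proof -
    have "ALG \<sigma> \<le> \<rho> * OPT \<sigma> + c" using H P \<sigma> by blast
    also have "\<rho> * OPT \<sigma> \<le> \<bar>\<rho>\<bar> * OPT \<sigma>"
      using OPT_bounds(1)[OF P \<sigma>] by (intro mult_right_mono) auto
    also have "\<dots> \<le> \<bar>\<rho>\<bar> * sum_list P"
      using OPT_bounds(2)[OF P \<sigma>] by (intro mult_left_mono) auto
    finally show ?thesis by simp
  qed
  with that[of "\<bar>\<rho>\<bar>" c] show thesis by simp
qed

section \<open>Speeds and weights\<close>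

lemma liminf_root_prod_ge:
  fixes s :: "nat \<Rightarrow> real"
  assumes speeds: "\<forall>i\<ge>2. 1 \<le> s i" and i0: "2 \<le> i0" and a: "1 \<le> a" and big: "\<forall>i\<ge>i0. a \<le> s i"
  shows "ereal (a powr (1 / 2)) \<le> liminf (\<lambda>n. ereal ((\<Prod>i=2..n. s i) powr (1 / real n)))"
proof (rule Liminf_bounded, unfold eventually_sequentially, intro exI allI impI)
  fix n assume n: "2 * i0 \<le> n"
  define e where "e = n + 1 - i0"
  have "{2..n} = {2..<i0} \<union> {i0..n}" using i0 n by auto
  then have "(\<Prod>i=2..n. s i) = (\<Prod>i\<in>{2..<i0}. s i) * (\<Prod>i=i0..n. s i)"
    by (simp only:) (rule prod.union_disjoint, auto)
  moreover have "1 \<le> (\<Prod>i\<in>{2..<i0}. s i)" using speeds by (intro prod_ge_1) auto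
  moreover have "a ^ e \<le> (\<Prod>i=i0..n. s i)"
    using prod_mono[of "{i0..n}" "\<lambda>_. a" s] big a by (simp add: e_def)
  ultimately have prod: "a ^ e \<le> (\<Prod>i=2..n. s i)"
    using mult_mono[of 1 "\<Prod>i\<in>{2..<i0}. s i" "a ^ e" "\<Prod>i=i0..n. s i"] a by simp
  have "a powr (1 / 2) \<le> a powr (real e / real n)"
    using a n i0 by (intro powr_mono) (auto simp: e_def field_simps)
  also have "\<dots> = (a ^ e) powr (1 / real n)"
    using a by (simp add: powr_realpow[symmetric] powr_powr)
  also have "\<dots> \<le> (\<Prod>i=2..n. s i) powr (1 / real n)"
    using prod a by (intro powr_mono2) auto
  finally show "ereal (a powr (1 / 2)) \<le> ereal ((\<Prod>i=2..n. s i) powr (1 / real n))" by simp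
qed

lemma speeds_tendsto_one:
  fixes s :: "nat \<Rightarrow> real"
  assumes speeds: "\<forall>i\<ge>2. 1 \<le> s i"
    and monotone: "(\<forall>i j. 2 \<le> i \<longrightarrow> i \<le> j \<longrightarrow> s i \<le> s j) \<or>
                   (\<forall>i j. 2 \<le> i \<longrightarrow> i \<le> j \<longrightarrow> s j \<le> s i)"
    and liminf_one: "liminf (\<lambda>n. ereal ((\<Prod>i=2..n. s i) powr (1 / real n))) = 1"
  shows "s \<longlonglongrightarrow> 1"
proof (rule order_tendstoI)
  fix y :: real assume "y < 1"
  then have "\<forall>i\<ge>2. y < s i" using speeds by force
  then show "eventually (\<lambda>i. y < s i) sequentially" unfolding eventually_sequentially by blast
next
  fix y :: real assume y: "1 < y"
  show "eventually (\<lambda>i. s i < y) sequentially"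
  proof (rule ccontr)
    assume "\<not> ?thesis"
    then have often: "\<forall>m. \<exists>i\<ge>m. y \<le> s i" by (auto simp: eventually_sequentially not_less)
    obtain i0 where "2 \<le> i0" "\<forall>i\<ge>i0. y \<le> s i"
    proof (cases "\<forall>i j. 2 \<le> i \<longrightarrow> i \<le> j \<longrightarrow> s i \<le> s j")
      case True
      obtain i1 where "2 \<le> i1" "y \<le> s i1" using often by blast
      then show thesis using True that[of i1] by force
    next
      case False
      then have decreasing: "\<forall>i j. 2 \<le> i \<longrightarrow> i \<le> j \<longrightarrow> s j \<le> s i" using monotone by blast
      have "y \<le> s i" if "2 \<le> i" for i
      proof -
        obtain j where "i \<le> j" "y \<le> s j" using often by blast
        then show ?thesis using decreasing that by force
      qed
      then show thesis using that[of 2] by simp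
    qed
    then have "ereal (y powr (1 / 2)) \<le> 1"
      using liminf_root_prod_ge[OF speeds] y liminf_one by fastforce
    moreover have "1 < y powr (1 / 2)" using powr_less_mono[of 0 "1 / 2" y] y by simp
    ultimately show False by simp
  qed
qed

lemma min_le_step_weight:
  fixes a B \<sigma> :: real
  assumes "0 \<le> a" "0 < B" "1 \<le> \<sigma>" "\<sigma> \<le> 1 + 1 / (2 * B + 2)"
  shows "min B (a + 1 / 4) \<le> (a + 1) / \<sigma>"
proof -
  define \<eta> where "\<eta> = 1 / (2 * B + 2)"
  have \<eta>: "0 < \<eta>" "\<eta> * B \<le> 1 / 2" "\<eta> \<le> 1 / 2" unfolding \<eta>_def using assms(2) by (auto simp: field_simps)
  have "min B (a + 1 / 4) * (1 + \<eta>) \<le> a + 1"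
  proof (cases "B \<le> a")
    case True
    have "min B (a + 1 / 4) * (1 + \<eta>) \<le> B * (1 + \<eta>)" using \<eta> by (intro mult_right_mono) auto
    then show ?thesis using True \<eta> by (simp add: algebra_simps)
  next
    case False
    then have "\<eta> * a \<le> \<eta> * B" using \<eta> by (intro mult_left_mono) auto
    moreover have "min B (a + 1 / 4) * (1 + \<eta>) \<le> (a + 1 / 4) * (1 + \<eta>)" using \<eta> by (intro mult_right_mono) auto
    moreover have "(a + 1 / 4) * (1 + \<eta>) = a + 1 / 4 + \<eta> * a + \<eta> / 4" by (simp add: algebra_simps)
    ultimately show ?thesis using \<eta> by linarith
  qed
  then have "min B (a + 1 / 4) \<le> (a + 1) / (1 + \<eta>)" using \<eta> by (simp add: field_simps)
  also have "\<dots> \<le> (a + 1) / \<sigma>" using assms by (intro divide_left_mono) (auto simp: \<eta>_def)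
  finally show ?thesis .
qed

lemma dc_weight_tendsto_at_top:
  assumes speeds: "\<forall>i\<ge>2. 1 \<le> s i" and lim: "s \<longlonglongrightarrow> 1"
  shows "filterlim (dc_weight s) at_top sequentially"
  unfolding filterlim_at_top_gt[where c = 0]
proof (intro allI impI)
  fix B :: real assume B: "0 < B"
  have "eventually (\<lambda>i. s i < 1 + 1 / (2 * B + 2)) sequentially"
    using B by (intro order_tendstoD(2)[OF lim]) simp
  then obtain m0 where m0: "\<forall>i\<ge>m0. s i \<le> 1 + 1 / (2 * B + 2)"
    unfolding eventually_sequentially by (meson less_imp_le)
  define m where "m = max m0 1"
  txt \<open>Below B, every step gains at least 1/4.\<close>
  have gain: "min B (real k / 4) \<le> dc_weight s (m + k)" for k
  proof (induction k)
    case 0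
    then show ?case using dc_weight_nonneg[OF speeds] B by (simp add: min_def)
  next
    case (Suc k)
    let ?a = "dc_weight s (m + k)" and ?\<sigma> = "s (Suc (m + k))"
    have \<sigma>: "1 \<le> ?\<sigma>" "?\<sigma> \<le> 1 + 1 / (2 * B + 2)" using speeds m0 by (auto simp: m_def)
    have "dc_weight s (m + Suc k) = (?a + 1) / ?\<sigma>"
      using dc_weight_Suc[of s "m + k"] \<sigma> by (simp add: m_def field_simps)
    moreover have "min B (real (Suc k) / 4) \<le> min B (?a + 1 / 4)"
      using Suc.IH by (cases "B \<le> real k / 4") (auto simp: min_def)
    ultimately show ?case
      using min_le_step_weight[OF dc_weight_nonneg[OF speeds, of "m + k"] B \<sigma>] by linarith
  qed
  have "B \<le> dc_weight s j" if "m + nat \<lceil>4 * B\<rceil> \<le> j" for j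
    using gain[of "j - m"] that by (simp add: min_def split: if_splits; linarith)
  then show "eventually (\<lambda>j. B \<le> dc_weight s j) sequentially"
    unfolding eventually_sequentially by blast
qed

section \<open>The adversary\<close>

definition grid :: "nat \<Rightarrow> real list" where
  "grid n = map (\<lambda>k. 1 + real k / real n) [0..<n]"

lemma grid_bounds: "p \<in> set (grid n) \<Longrightarrow> 1 \<le> p \<and> p \<le> 2"
  unfolding grid_def by auto

lemma card_set_grid: "card (set (grid n)) = n"
proof -
  have "inj_on (\<lambda>k. 1 + real k / real n) {0..<n}" by (rule inj_onI) (auto simp: field_simps)
  then show ?thesis unfolding grid_def by (simp add: card_image)
qed

lemma grid_separated:
  assumes "p \<in> set (grid n)" "q \<in> set (grid n)" "p \<noteq> q"
  shows "1 / real n \<le> \<bar>p - q\<bar>"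
proof -
  obtain k l :: nat where "p = 1 + real k / real n" "q = 1 + real l / real n" "k \<noteq> l" "0 < n"
    using assms unfolding grid_def by auto
  then have "\<bar>p - q\<bar> = \<bar>real k - real l\<bar> / real n" by (simp add: diff_divide_distrib[symmetric])
  moreover have "1 \<le> \<bar>real k - real l\<bar>" using \<open>k \<noteq> l\<close> by linarith
  ultimately show ?thesis using \<open>0 < n\<close> by (simp add: divide_right_mono)
qed

lemma sum_list_grid_le: "sum_list (grid n) \<le> 2 * real n"
proof -
  have "sum_list (grid n) = (\<Sum>k<n. 1 + real k / real n)"
    unfolding grid_def by (simp add: sum_set_upt_conv_sum_list_nat[symmetric] atLeast0LessThan)
  also have "\<dots> \<le> (\<Sum>k<n. 2)" by (intro sum_mono) simp
  finally show ?thesis by simp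
qed

lemma competitive_obtains_grid_bound:
  assumes "competitive ALG"
  obtains \<rho> c where "0 \<le> \<rho>" and "\<And>n \<sigma>. set \<sigma> \<subseteq> set (grid n) \<Longrightarrow> ALG \<sigma> \<le> \<rho> * (2 * real n) + c"
proof -
  obtain \<rho> c where \<rho>: "0 \<le> \<rho>"
    and bound: "\<And>P \<sigma>. \<forall>p\<in>set P. 0 \<le> p \<Longrightarrow> set \<sigma> \<subseteq> set P \<Longrightarrow> ALG \<sigma> \<le> \<rho> * sum_list P + c"
    using competitive_obtains_sum_list_bound[OF assms] by blast
  have "ALG \<sigma> \<le> \<rho> * (2 * real n) + c" if "set \<sigma> \<subseteq> set (grid n)" for n \<sigma>
  proof -
    have "ALG \<sigma> \<le> \<rho> * sum_list (grid n) + c" using bound[OF _ that] grid_bounds by fastforce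
    also have "\<rho> * sum_list (grid n) \<le> \<rho> * (2 * real n)"
      using sum_list_grid_le \<rho> by (rule mult_left_mono)
    finally show ?thesis by simp
  qed
  with \<rho> that show thesis by blast
qed

lemma exists_le_average:
  fixes f :: "nat \<Rightarrow> real"
  assumes "0 < T" and "(\<Sum>t<T. f t) \<le> K"
  obtains t where "t < T" and "f t \<le> K / real T"
proof (rule ccontr)
  assume "\<not> thesis"
  with that have "\<forall>t\<in>{..<T}. K / real T < f t" by force
  then have "(\<Sum>t<T. K / real T) < (\<Sum>t<T. f t)" using assms(1) by (intro sum_strict_mono) auto
  then show False using assms by simp
qed

lemma obtain_distinct_near_indices:
  fixes x :: "'a \<Rightarrow> real"
  assumes near: "\<forall>p\<in>A. \<exists>j. \<bar>x j - p\<bar> \<le> \<delta>"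
    and separated: "\<forall>p\<in>A. \<forall>q\<in>A. p \<noteq> q \<longrightarrow> 2 * \<delta> < \<bar>p - q\<bar>"
  obtains J where "card J = card A" and "\<forall>j\<in>J. \<exists>p\<in>A. \<bar>x j - p\<bar> \<le> \<delta>"
proof -
  obtain f where f: "\<forall>p\<in>A. \<bar>x (f p) - p\<bar> \<le> \<delta>" using near by metis
  have "inj_on f A"
  proof (rule inj_onI, rule ccontr)
    fix p q assume pq: "p \<in> A" "q \<in> A" "f p = f q" "p \<noteq> q"
    then have "\<bar>p - q\<bar> \<le> \<bar>x (f p) - p\<bar> + \<bar>x (f q) - q\<bar>" by simp
    also have "\<dots> \<le> 2 * \<delta>" using f pq(1,2) by (smt (verit))
    finally show False using separated pq by fastforce
  qed
  moreover have "\<forall>j\<in>f ` A. \<exists>p\<in>A. \<bar>x j - p\<bar> \<le> \<delta>" using f by blast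
  ultimately show thesis using that[of "f ` A"] by (simp add: card_image)
qed

text \<open>Repeat P more than K / \<delta> times; by averaging, some round costs at most \<delta>.\<close>

lemma dc_bounded_cost_obtains_covering_run:
  assumes speeds: "\<forall>i\<ge>2. 1 \<le> s i" and pos: "\<forall>p\<in>set P. 0 < p"
    and bounded: "\<And>\<sigma>. set \<sigma> \<subseteq> set P \<Longrightarrow> DC_cost s \<sigma> \<le> K" and \<delta>: "0 < \<delta>"
  obtains \<sigma> where "set \<sigma> \<subseteq> set P" "\<forall>r\<in>set \<sigma>. 0 < r"
    and "\<forall>p\<in>set P. \<exists>j. \<bar>dc_run s (\<lambda>_. 0) \<sigma> j - p\<bar> \<le> \<delta>"
proof -
  define R where "R t = concat (replicate t P)" for t
  have R_Suc: "R (Suc t) = R t @ P" for t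
    unfolding R_def by (simp flip: replicate_append_same)
  have R: "set (R t) \<subseteq> set P" "\<forall>r\<in>set (R t). 0 < r" for t
    using pos unfolding R_def by auto
  define x where "x t = dc_run s (\<lambda>_. 0) (R t)" for t
  define round where "round t = dc_cost_from s (x t) P" for t
  have "DC_cost s (R T) = (\<Sum>t<T. round t)" for T
    by (induction T) (simp_all add: DC_cost_def R_def[of 0] R_Suc dc_cost_from_append round_def x_def)
  define T where "T = nat \<lceil>K / \<delta>\<rceil> + 1"
  then have "0 < T" "K / \<delta> \<le> real T" by linarith+
  moreover have "(\<Sum>t<T. round t) \<le> K" using bounded[OF R(1)[of T]] \<open>DC_cost s (R T) = _\<close> by simp
  ultimately obtain t where "round t \<le> K / real T" by (blast elim: exists_le_average)
  also have "\<dots> \<le> \<delta>" using \<open>0 < T\<close> \<open>K / \<delta> \<le> real T\<close> \<delta> by (simp add: field_simps)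
  finally have "round t \<le> \<delta>" .
  have "server_config 0 (\<lambda>_. 0)" unfolding server_config_def by simp
  then have "server_config (length (R t)) (x t)" unfolding x_def using dc_run_config[OF speeds] R by fastforce
  then have "\<forall>p\<in>set P. \<exists>j. \<bar>dc_run s (x t) P j - p\<bar> \<le> round t"
    using dc_run_serves[OF speeds] pos unfolding round_def by blast
  then have "\<forall>p\<in>set P. \<exists>j. \<bar>dc_run s (\<lambda>_. 0) (R (Suc t)) j - p\<bar> \<le> \<delta>"
    using \<open>round t \<le> \<delta>\<close> unfolding R_Suc dc_run_append x_def by (meson order.trans)
  with R show thesis by (intro that)
qed

lemma potential_ge_card:
  assumes "finite J" "J \<subseteq> {..<N}" "\<forall>j\<in>J. h \<le> x j" "0 \<le> h"
    and "\<forall>j. 0 \<le> w j" "\<forall>j. 0 \<le> x j" "0 \<le> B" "\<forall>j\<ge>m. B \<le> w j"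
  shows "real (card J - m) * B * h \<le> potential N w x"
proof -
  have "card J - m \<le> card (J - {..<m})" using diff_card_le_card_Diff[of "{..<m}" J] by simp
  then have "real (card J - m) * (B * h) \<le> (\<Sum>j\<in>J - {..<m}. B * h)"
    using assms by (simp add: mult_right_mono)
  also have "\<dots> \<le> (\<Sum>j\<in>J - {..<m}. w j * x j)"
    using assms by (intro sum_mono mult_mono) auto
  also have "\<dots> \<le> potential N w x"
    unfolding potential_def using assms by (intro sum_mono2) (auto intro: mult_nonneg_nonneg)
  finally show ?thesis by (simp add: mult.assoc)
qed

lemma potential_ge_covering_grid:
  assumes x: "server_config L x"
    and near: "\<forall>p\<in>set (grid n). \<exists>j. \<bar>x j - p\<bar> \<le> 1 / (4 * real n)"
    and w: "\<forall>j. 0 \<le> w j" "0 \<le> B" "\<forall>j\<ge>m. B \<le> w j"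
  shows "real (n - m) * B / 2 \<le> potential (Suc L) w x"
proof (cases "n = 0")
  case False
  have "2 * (1 / (4 * real n)) < 1 / real n" using False by (simp add: field_simps)
  then have "\<forall>p\<in>set (grid n). \<forall>q\<in>set (grid n). p \<noteq> q \<longrightarrow> 2 * (1 / (4 * real n)) < \<bar>p - q\<bar>"
    using grid_separated by (meson less_le_trans)
  from obtain_distinct_near_indices[OF near this]
  obtain J where J: "card J = n" "\<forall>j\<in>J. \<exists>p\<in>set (grid n). \<bar>x j - p\<bar> \<le> 1 / (4 * real n)"
    unfolding card_set_grid .
  have "1 / (4 * real n) \<le> 1 / 2" using False by (simp add: field_simps)
  then have half: "\<forall>j\<in>J. 1 / 2 \<le> x j" using J(2) grid_bounds by fastforce
  have "J \<subseteq> {..<Suc L}"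
  proof
    fix j assume "j \<in> J"
    then have "1 / 2 \<le> x j" using half by blast
    then have "x j \<noteq> 0" by linarith
    then show "j \<in> {..<Suc L}" using x unfolding server_config_def by (meson lessThan_iff not_less_eq)
  qed
  moreover have "finite J" using J(1) False card_gt_0_iff by blast
  ultimately have "real (n - m) * B * (1 / 2) \<le> potential (Suc L) w x"
    using potential_ge_card[of J "Suc L" "1 / 2" x w B m] J(1) half w x
    by (simp add: server_config_def)
  then show ?thesis by simp
next
  case True
  have "0 \<le> potential (Suc L) w x"
    unfolding potential_def using w(1) x by (simp add: server_config_def sum_nonneg)
  with True show ?thesis by simp
qed

theorem lemma2:
  fixes s :: "nat \<Rightarrow> real"
  assumes speeds_ge1: "\<forall>i\<ge>2. 1 \<le> s i"
    and monotone: "(\<forall>i j. 2 \<le> i \<longrightarrow> i \<le> j \<longrightarrow> s i \<le> s j) \<or>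
                   (\<forall>i j. 2 \<le> i \<longrightarrow> i \<le> j \<longrightarrow> s j \<le> s i)"
    and liminf_one: "liminf (\<lambda>n. ereal ((\<Prod>i=2..n. s i) powr (1 / real n))) = 1"
  shows "\<not> competitive (DC_cost s)"
proof
  assume "competitive (DC_cost s)"
  then obtain \<rho> c where \<rho>: "0 \<le> \<rho>"
    and competitive: "\<And>n \<sigma>. set \<sigma> \<subseteq> set (grid n) \<Longrightarrow> DC_cost s \<sigma> \<le> \<rho> * (2 * real n) + c"
    by (rule competitive_obtains_grid_bound) blast
  define B where "B = 4 * (\<rho> + \<bar>c\<bar> + 1)"
  have "filterlim (dc_weight s) at_top sequentially"
    using dc_weight_tendsto_at_top speeds_tendsto_one assms by blast
  then obtain m where m: "\<forall>j\<ge>m. B \<le> dc_weight s j"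
    unfolding filterlim_at_top eventually_sequentially by blast
  define n where "n = 2 * m + 2"
  define K where "K = \<rho> * (2 * real n) + c"
  have bounded: "\<And>\<sigma>. set \<sigma> \<subseteq> set (grid n) \<Longrightarrow> DC_cost s \<sigma> \<le> K"
    unfolding K_def by (rule competitive)
  have grid_pos: "\<forall>p\<in>set (grid n). 0 < p" using grid_bounds by fastforce
  have "0 < 1 / (4 * real n)" unfolding n_def by simp
  from dc_bounded_cost_obtains_covering_run[OF speeds_ge1 grid_pos bounded this]
  obtain \<sigma> where \<sigma>: "set \<sigma> \<subseteq> set (grid n)" "\<forall>r\<in>set \<sigma>. 0 < r"
    and near: "\<forall>p\<in>set (grid n). \<exists>j. \<bar>dc_run s (\<lambda>_. 0) \<sigma> j - p\<bar> \<le> 1 / (4 * real n)"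
    by blast
  have zero: "server_config 0 (\<lambda>_. 0)" unfolding server_config_def by simp
  let ?x = "dc_run s (\<lambda>_. 0) \<sigma>" and ?N = "Suc (length \<sigma>)"
  have "real (n - m) * B / 2 \<le> potential ?N (dc_weight s) ?x"
    using dc_run_config[OF speeds_ge1 zero \<sigma>(2)] near m dc_weight_nonneg[OF speeds_ge1] B_def \<rho>
    by (intro potential_ge_covering_grid) auto
  also have "\<dots> \<le> DC_cost s \<sigma> / 2"
    using dc_run_potential[OF speeds_ge1 zero \<sigma>(2), of ?N] by (simp add: DC_cost_def potential_def)
  also have "\<dots> \<le> K / 2" using bounded[OF \<sigma>(1)] by simp
  finally have "real (m + 2) * B \<le> K" unfolding n_def by simp
  then show False unfolding n_def K_def B_def using \<rho> abs_ge_self[of c]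
    by (simp add: algebra_simps) (smt (verit) abs_ge_zero of_nat_0_le_iff zero_le_mult_iff)
qed

end
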